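(* Any Koebe inner function belonging to $\mathsf{R}^{1/2}$ must be constant.
   Context: $\mathbb{D}$ is the open unit disk, $\mathbb{T}$ the unit circle. The Smirnov class is $N^+ = \{f/g : f,g \in H^\infty,\ g \text{ outer}\}$; $\mathsf{R}^+$ is the set of $f\in N^+$ whose radial boundary values are real a.e.~on $\mathbb{T}$, and $\mathsf{R}^{1/2} = \mathsf{R}^+\cap H^{1/2}$. A Koebe inner function is a function of the form $K\circ\phi$, where $\phi$ is an inner function and $K(z) = -4z/(1-z)^2$. *)

theory Defs
  imports "HOL-Analysis.Analysis"
begin

abbreviation unit_disc :: "complex set" where
  "unit_disc \<equiv> ball 0 1"

definition H_inf :: "(complex \<Rightarrow> complex) \<Rightarrow> bool" where
  "H_inf f \<longleftrightarrow> f holomorphic_on unit_disc \<and> bounded (f ` unit_disc)"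

definition radial_limit :: "(complex \<Rightarrow> complex) \<Rightarrow> real \<Rightarrow> complex \<Rightarrow> bool" where
  "radial_limit f \<theta> L \<longleftrightarrow> ((\<lambda>r. f (complex_of_real r * cis \<theta>)) \<longlongrightarrow> L) (at_left 1)"

definition inner_fun :: "(complex \<Rightarrow> complex) \<Rightarrow> bool" where
  "inner_fun f \<longleftrightarrow> H_inf f \<and>
     (AE \<theta> in lborel. \<theta> \<in> {0..2*pi} \<longrightarrow> (\<exists>L. radial_limit f \<theta> L \<and> norm L = 1))"

definition outer_fun :: "(complex \<Rightarrow> complex) \<Rightarrow> bool" where
  "outer_fun g \<longleftrightarrow> (\<exists>c u. norm c = 1 \<and> set_integrable lborel {0..2*pi} (u :: real \<Rightarrow> real) \<and>
     (\<forall>z\<in>unit_disc. g z = c * exp (complex_of_real (1 / (2*pi)) *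
        (LINT t:{0..2*pi}|lborel. ((cis t + z) / (cis t - z)) * complex_of_real (u t)))))"

definition smirnov :: "(complex \<Rightarrow> complex) \<Rightarrow> bool" where
  "smirnov f \<longleftrightarrow> (\<exists>F G. H_inf F \<and> H_inf G \<and> outer_fun G \<and> (\<forall>z\<in>unit_disc. f z = F z / G z))"

definition R_plus :: "(complex \<Rightarrow> complex) \<Rightarrow> bool" where
  "R_plus f \<longleftrightarrow> smirnov f \<and>
     (AE \<theta> in lborel. \<theta> \<in> {0..2*pi} \<longrightarrow> (\<exists>L. radial_limit f \<theta> L \<and> L \<in> \<real>))"

definition hardy :: "real \<Rightarrow> (complex \<Rightarrow> complex) \<Rightarrow> bool" where
  "hardy p f \<longleftrightarrow> f holomorphic_on unit_disc \<and>
     (\<exists>M. \<forall>r\<in>{0<..<1}. (LINT t:{0..2*pi}|lborel. norm (f (complex_of_real r * cis t)) powr p) \<le> M)"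

definition R_half :: "(complex \<Rightarrow> complex) \<Rightarrow> bool" where
  "R_half f \<longleftrightarrow> R_plus f \<and> hardy (1/2) f"

definition koebe :: "complex \<Rightarrow> complex" where
  "koebe z = - 4 * z / (1 - z)\<^sup>2"

end

theory Submission
  imports Defs "HOL-Complex_Analysis.Complex_Analysis"
begin

text \<open>A nonconstant inner function \<open>\<phi>\<close> has \<open>|\<phi>| < 1\<close> in the disc, so \<open>h = (1 + \<phi>) / (1 - \<phi>)\<close>
  has positive real part and \<open>h\<^sup>2 = 1 - koebe \<circ> \<phi>\<close>. Thus \<open>|h| \<le> 1 + |koebe \<circ> \<phi>|^(1/2)\<close>, and the
  \<open>H^(1/2)\<close> hypothesis puts \<open>\<surd>h\<close> in \<open>H\<^sup>2\<close>, i.e. \<open>h\<close> in \<open>H\<^sup>1\<close>. Wherever \<open>koebe \<circ> \<phi>\<close> has a radial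
  limit, the unimodular radial limit of \<open>\<phi>\<close> is not \<open>1\<close>, so \<open>Re h\<close> has radial limit \<open>0\<close> almost
  everywhere. For \<open>h \<in> H\<^sup>1\<close> the mean value \<open>Re (h 0)\<close> is then the mean of these boundary values,
  i.e. \<open>0\<close>, contradicting \<open>Re (h 0) > 0\<close>.\<close>

section \<open>Integrals over the circle\<close>

lemma integral_cis_int_multiple:
  fixes k :: int
  shows "(LINT t:{0..2*pi}|lborel. cis (of_int k * t)) = (if k = 0 then 2*pi else 0)"
proof (cases "k = 0")
  case True
  then show ?thesis by (simp add: set_lebesgue_integral_def scaleR_conv_of_real)
next
  case False
  let ?F = "\<lambda>t. cis (of_int k * t) / (\<i> * of_int k)"
  have deriv: "(?F has_vector_derivative cis (of_int k * t)) (at t within {0..2*pi})" for t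
  proof -
    have "((\<lambda>t. cis (of_int k * t)) has_derivative (\<lambda>h. (of_int k * h) *\<^sub>R (\<i> * cis (of_int k * t))))
            (at t within {0..2*pi})"
      by (auto intro!: derivative_eq_intros)
    then have "((\<lambda>t. cis (of_int k * t)) has_vector_derivative (of_int k * (\<i> * cis (of_int k * t))))
                 (at t within {0..2*pi})"
      by (simp add: has_vector_derivative_def scaleR_conv_of_real algebra_simps)
    then have "(?F has_vector_derivative (of_int k * (\<i> * cis (of_int k * t))) / (\<i> * of_int k))
                 (at t within {0..2*pi})"
      by (rule has_vector_derivative_divide)
    then show ?thesis using False by (simp add: field_simps)
  qed
  have "integral\<^sup>L lborel (\<lambda>x. indicator {0..2*pi} x *\<^sub>R cis (of_int k * x)) = ?F (2*pi) - ?F 0"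
    by (rule integral_FTC_atLeastAtMost) (auto intro!: deriv continuous_intros)
  also have "?F (2*pi) = ?F 0"
    using cis_multiple_2pi[of "of_int k"] by (simp add: mult.commute)
  finally show ?thesis using False by (simp add: set_lebesgue_integral_def)
qed

lemma set_integral_sum:
  fixes f :: "'i \<Rightarrow> 'a \<Rightarrow> 'b::{banach, second_countable_topology}"
  assumes "\<And>i. i \<in> I \<Longrightarrow> set_integrable M A (f i)"
  shows "(LINT t:A|M. (\<Sum>i\<in>I. f i t)) = (\<Sum>i\<in>I. LINT t:A|M. f i t)"
  using assms unfolding set_lebesgue_integral_def set_integrable_def
  by (simp add: scaleR_sum_right integral_sum)

lemma set_integral_Re:
  assumes "set_integrable M A f"
  shows "(LINT x:A|M. Re (f x)) = Re (LINT x:A|M. f x)"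
proof -
  have "(LINT x:A|M. Re (f x)) = integral\<^sup>L M (\<lambda>x. Re (indicator A x *\<^sub>R f x))"
    unfolding set_lebesgue_integral_def by simp
  also have "\<dots> = Re (integral\<^sup>L M (\<lambda>x. indicator A x *\<^sub>R f x))"
    using assms unfolding set_integrable_def by (rule integral_bounded_linear[OF bounded_linear_Re])
  finally show ?thesis unfolding set_lebesgue_integral_def .
qed

lemma set_integrable_cis: "set_integrable lborel {0..2*pi} (\<lambda>t. c * cis (a * t))"
  by (rule borel_integrable_atLeastAtMost') (auto intro!: continuous_intros)

lemma circle_integral_norm_trig_poly_square:
  fixes c :: "nat \<Rightarrow> complex"
  shows "(LINT t:{0..2*pi}|lborel. (cmod (\<Sum>n<M. c n * cis (real n * t)))^2)
           = 2*pi * (\<Sum>n<M. (cmod (c n))^2)"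
proof -
  let ?e = "\<lambda>n m t. c n * cnj (c m) * cis (of_int (int n - int m) * t)"
  have expand: "complex_of_real ((cmod (\<Sum>n<M. c n * cis (real n * t)))^2) = (\<Sum>n<M. \<Sum>m<M. ?e n m t)"
    for t
  proof -
    have "complex_of_real ((cmod (\<Sum>n<M. c n * cis (real n * t)))^2)
       = (\<Sum>n<M. c n * cis (real n * t)) * cnj (\<Sum>n<M. c n * cis (real n * t))"
      by (rule complex_norm_square)
    also have "\<dots> = (\<Sum>n<M. \<Sum>m<M. (c n * cis (real n * t)) * (cnj (c m) * cis (- (real m * t))))"
      by (simp add: cnj_sum sum_product cis_cnj)
    also have "\<dots> = (\<Sum>n<M. \<Sum>m<M. ?e n m t)"
      by (intro sum.cong refl) (simp add: cis_mult algebra_simps)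
    finally show ?thesis .
  qed
  have int_inner: "set_integrable lborel {0..2*pi} (\<lambda>t. \<Sum>m<M. ?e n m t)" for n
    by (rule borel_integrable_atLeastAtMost') (intro continuous_intros)
  have "complex_of_real (LINT t:{0..2*pi}|lborel. (cmod (\<Sum>n<M. c n * cis (real n * t)))^2)
     = (LINT t:{0..2*pi}|lborel. (\<Sum>n<M. \<Sum>m<M. ?e n m t))"
    by (simp only: set_integral_complex_of_real[symmetric] expand)
  also have "\<dots> = (\<Sum>n<M. \<Sum>m<M. LINT t:{0..2*pi}|lborel. ?e n m t)"
    by (simp only: set_integral_sum[OF int_inner] set_integral_sum[OF set_integrable_cis])
  also have "\<dots> = (\<Sum>n<M. \<Sum>m<M. c n * cnj (c m) * (if int n - int m = 0 then 2*pi else 0))"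
    by (simp add: integral_cis_int_multiple del: of_int_diff)
  also have "\<dots> = complex_of_real (2*pi * (\<Sum>n<M. (cmod (c n))^2))"
    by (simp add: if_distrib complex_norm_square sum_distrib_left mult.commute
                  cong: if_cong flip: of_real_power)
  finally show ?thesis by (simp only: of_real_eq_iff)
qed

lemma set_integral_circle_dominated_convergence:
  fixes F :: "nat \<Rightarrow> real \<Rightarrow> 'b::{banach,second_countable_topology}"
  assumes "\<And>i. continuous_on {0..2*pi} (F i)" and "continuous_on {0..2*pi} G"
    and lim: "AE t in lborel. t \<in> {0..2*pi} \<longrightarrow> (\<lambda>i. F i t) \<longlonglongrightarrow> G t"
    and bound: "\<And>i t. t \<in> {0..2*pi} \<Longrightarrow> norm (F i t) \<le> B"
  shows "(\<lambda>i. LINT t:{0..2*pi}|lborel. F i t) \<longlonglongrightarrow> (LINT t:{0..2*pi}|lborel. G t)"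
  unfolding set_lebesgue_integral_def
proof (rule integral_dominated_convergence[where w = "\<lambda>t. indicator {0..2*pi} t * B"])
  show "(\<lambda>t. indicator {0..2*pi} t *\<^sub>R G t) \<in> borel_measurable lborel"
    "(\<lambda>t. indicator {0..2*pi} t *\<^sub>R F i t) \<in> borel_measurable lborel" for i
    using borel_integrable_atLeastAtMost' assms(1,2) unfolding set_integrable_def
    by (blast intro: borel_measurable_integrable)+
  show "integrable lborel (\<lambda>t. indicator {0..2*pi} t * B)"
    using borel_integrable_atLeastAtMost'[of 0 "2*pi" "\<lambda>_. B"] unfolding set_integrable_def
    by simp
  show "AE t in lborel. (\<lambda>i. indicator {0..2*pi} t *\<^sub>R F i t) \<longlonglongrightarrow> indicator {0..2*pi} t *\<^sub>R G t"
    using lim by eventually_elim (auto split: split_indicator)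
  show "AE t in lborel. norm (indicator {0..2*pi} t *\<^sub>R F i t) \<le> indicator {0..2*pi} t * B" for i
    by (intro AE_I2) (auto split: split_indicator intro: bound)
qed

section \<open>Power series on circles\<close>

lemma holomorphic_on_unit_disc_sums:
  assumes "f holomorphic_on unit_disc" "w \<in> unit_disc"
  shows "(\<lambda>n. ((deriv ^^ n) f 0 / fact n) * w ^ n) sums f w"
  using holomorphic_power_series[OF assms] by simp

context
  fixes c :: "nat \<Rightarrow> complex" and f :: "complex \<Rightarrow> complex" and r :: real
  assumes sums: "\<And>w. w \<in> unit_disc \<Longrightarrow> (\<lambda>n. c n * w^n) sums f w"
    and r: "0 \<le> r" "r < 1"
begin

lemma power_series_circle_tendsto:
  "(\<lambda>M. \<Sum>n<M. (c n * of_real r ^ n) * cis (real n * t)) \<longlonglongrightarrow> f (r * cis t)"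
proof -
  have "r * cis t \<in> unit_disc" using r by (simp add: norm_mult)
  moreover have "(\<Sum>n<M. (c n * of_real r ^ n) * cis (real n * t)) = (\<Sum>n<M. c n * (r * cis t) ^ n)" for M
    by (intro sum.cong refl) (simp only: power_mult_distrib Complex.DeMoivre mult.assoc)
  ultimately show ?thesis using sums unfolding sums_def by presburger
qed

lemma power_series_circle_bounded:
  obtains A where "\<And>M t. norm (\<Sum>n<M. (c n * of_real r ^ n) * cis (real n * t)) \<le> A"
proof
  define x where "x = complex_of_real ((1 + r) / 2)"
  have norm_x: "norm x = (1 + r) / 2" unfolding x_def norm_of_real using r by simp
  then have "summable (\<lambda>n. c n * x ^ n)" using sums r by (auto simp: sums_iff)
  then have summable: "summable (\<lambda>n. norm (c n * complex_of_real r ^ n))"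
    by (rule powser_insidea) (use r norm_x in simp)
  fix M t
  have "norm (\<Sum>n<M. (c n * of_real r ^ n) * cis (real n * t))
          \<le> (\<Sum>n<M. norm (c n * complex_of_real r ^ n * cis (real n * t)))"
    by (rule norm_sum)
  also have "\<dots> = (\<Sum>n<M. norm (c n * complex_of_real r ^ n))"
    by (simp add: norm_mult)
  also have "\<dots> \<le> (\<Sum>n. norm (c n * complex_of_real r ^ n))"
    by (rule sum_le_suminf[OF summable]) auto
  finally show "norm (\<Sum>n<M. (c n * of_real r ^ n) * cis (real n * t)) \<le> \<dots>" .
qed

lemma power_series_circle_energy_sums:
  assumes cont: "continuous_on unit_disc f"
  shows "(\<lambda>n. (cmod (c n))^2 * r^(2*n)) sums ((LINT t:{0..2*pi}|lborel. (cmod (f (r * cis t)))^2) / (2*pi))"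
proof -
  let ?S = "\<lambda>M t. \<Sum>n<M. (c n * of_real r ^ n) * cis (real n * t)"
  obtain A where A: "\<And>M t. norm (?S M t) \<le> A"
    using power_series_circle_bounded by blast
  have "continuous_on {0..2*pi} (\<lambda>t. f (r * cis t))"
    by (rule continuous_on_compose2[OF cont]) (use r in \<open>auto intro!: continuous_intros simp: norm_mult\<close>)
  then have "(\<lambda>M. LINT t:{0..2*pi}|lborel. (cmod (?S M t))^2)
               \<longlonglongrightarrow> (LINT t:{0..2*pi}|lborel. (cmod (f (r * cis t)))^2)"
    using A by (intro set_integral_circle_dominated_convergence[where B = "A^2"] AE_I2 impI
                      continuous_intros tendsto_intros power_series_circle_tendsto)
               (auto intro: power_mono)
  moreover have "(LINT t:{0..2*pi}|lborel. (cmod (?S M t))^2) = 2*pi * (\<Sum>n<M. (cmod (c n))^2 * r^(2*n))" for M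
    using r by (subst circle_integral_norm_trig_poly_square)
      (simp add: norm_mult norm_power power_mult_distrib abs_of_nonneg mult.commute flip: power_mult)
  ultimately have "(\<lambda>M. (2*pi * (\<Sum>n<M. (cmod (c n))^2 * r^(2*n))) / (2*pi))
                     \<longlonglongrightarrow> (LINT t:{0..2*pi}|lborel. (cmod (f (r * cis t)))^2) / (2*pi)"
    by (intro tendsto_divide tendsto_const) auto
  then show ?thesis unfolding sums_def by simp
qed

lemma power_series_circle_mean:
  assumes cont: "continuous_on unit_disc f"
  shows "(LINT t:{0..2*pi}|lborel. f (r * cis t)) = 2*pi * c 0"
proof -
  let ?S = "\<lambda>M t. \<Sum>n<M. (c n * of_real r ^ n) * cis (real n * t)"
  obtain A where A: "\<And>M t. norm (?S M t) \<le> A"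
    using power_series_circle_bounded by blast
  have "continuous_on {0..2*pi} (\<lambda>t. f (r * cis t))"
    by (rule continuous_on_compose2[OF cont]) (use r in \<open>auto intro!: continuous_intros simp: norm_mult\<close>)
  then have "(\<lambda>M. LINT t:{0..2*pi}|lborel. ?S M t) \<longlonglongrightarrow> (LINT t:{0..2*pi}|lborel. f (r * cis t))"
    using A by (intro set_integral_circle_dominated_convergence[where B = A] AE_I2 impI
                      continuous_intros power_series_circle_tendsto)
  moreover have "(LINT t:{0..2*pi}|lborel. ?S M t) = (if M = 0 then 0 else 2*pi * c 0)" for M
  proof -
    have "(LINT t:{0..2*pi}|lborel. ?S M t)
            = (\<Sum>n<M. (c n * of_real r ^ n) * (if n = 0 then 2*pi else 0))"
      using integral_cis_int_multiple[of "int n" for n]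
      by (subst set_integral_sum) (simp_all add: set_integrable_cis)
    also have "\<dots> = (if M = 0 then 0 else 2*pi * c 0)"
      by (simp add: if_distrib cong: if_cong)
    finally show ?thesis .
  qed
  moreover have "(\<lambda>M. if M = 0 then 0 else 2*pi * c 0) \<longlonglongrightarrow> 2*pi * c 0"
    by (rule tendsto_eventually) (auto simp: eventually_sequentially intro!: exI[of _ 1])
  ultimately show ?thesis
    using LIMSEQ_unique by fastforce
qed

end

section \<open>Approaching the boundary along radii\<close>

definition radii :: "nat \<Rightarrow> real" where "radii j = 1 - inverse (real (Suc (Suc j)))"

lemma radii_pos: "0 < radii j" and radii_less_1: "radii j < 1"
  by (auto simp: radii_def field_simps)

lemma radii_circle_in_unit_disc: "complex_of_real (radii j) * cis t \<in> unit_disc"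
  using radii_pos[of j] radii_less_1[of j] by (simp add: norm_mult)

lemma radii_tendsto_1: "radii \<longlonglongrightarrow> 1"
proof -
  have "(\<lambda>j. 1 - inverse (real (Suc (Suc j)))) \<longlonglongrightarrow> 1 - 0"
    by (intro tendsto_diff tendsto_const LIMSEQ_Suc[OF LIMSEQ_inverse_real_of_nat])
  then show ?thesis by (simp add: radii_def[abs_def])
qed

lemma filterlim_radii_at_left_1: "filterlim radii (at_left 1) sequentially"
  unfolding filterlim_at using radii_tendsto_1 radii_less_1
  by (auto intro!: always_eventually less_imp_neq)

lemma eventually_radii_ge:
  assumes "q < 1"
  shows "eventually (\<lambda>j. q \<le> radii j) sequentially"
  using order_tendstoD(1)[OF radii_tendsto_1 assms] by eventually_elim simp

lemma radial_limit_radii_tendsto: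
  assumes "radial_limit f t L"
  shows "(\<lambda>j. f (complex_of_real (radii j) * cis t)) \<longlonglongrightarrow> L"
  using filterlim_compose[OF assms[unfolded radial_limit_def] filterlim_radii_at_left_1]
  by (simp add: o_def)

lemma continuous_on_radii_circle:
  assumes "continuous_on unit_disc f"
  shows "continuous_on {0..2*pi} (\<lambda>t. f (complex_of_real (radii j) * cis t))"
  by (rule continuous_on_compose2[OF assms])
     (use radii_circle_in_unit_disc in \<open>auto intro!: continuous_intros\<close>)

lemma summable_if_radii_weighted_sums_bounded:
  fixes a :: "nat \<Rightarrow> real"
  assumes nonneg: "\<And>n. 0 \<le> a n" and sums: "\<And>j. (\<lambda>n. a n * radii j ^ (2*n)) sums S j"
    and bound: "\<And>j. S j \<le> C"
  shows "summable a"
proof -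
  have "(\<Sum>n<M. a n) \<le> C" for M
  proof -
    have "(\<Sum>n<M. a n * radii j ^ (2*n)) \<le> C" for j
    proof -
      have "(\<Sum>n<M. a n * radii j ^ (2*n)) \<le> S j"
        using sum_le_suminf[OF sums_summable[OF sums[of j]], of "{..<M}"] sums_unique[OF sums[of j]]
          nonneg radii_pos[of j]
        by (auto intro: mult_nonneg_nonneg less_imp_le)
      then show ?thesis using bound[of j] by linarith
    qed
    moreover have "(\<lambda>j. \<Sum>n<M. a n * radii j ^ (2*n)) \<longlonglongrightarrow> (\<Sum>n<M. a n * 1 ^ (2*n))"
      by (intro tendsto_intros radii_tendsto_1)
    ultimately show ?thesis by (simp add: LIMSEQ_le_const2)
  qed
  then show ?thesis using nonneg by (intro summableI_nonneg_bounded) auto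
qed

section \<open>Inner functions map the disc into the closed disc\<close>

lemma norm_power_series_le_energy:
  fixes c :: "nat \<Rightarrow> complex"
  assumes sums: "(\<lambda>n. c n * z^n) sums fz"
    and energy: "(\<lambda>n. (cmod (c n))^2 * r^(2*n)) sums X"
    and z: "norm z \<le> q * r" and q: "0 \<le> q" "q < 1" and r: "0 < r"
  shows "norm fz \<le> (X + 1 / (1 - q^2)) / 2"
proof -
  have "norm (q^2) < 1" using q by (simp add: power_less_one_iff)
  then have majorant: "(\<lambda>n. ((cmod (c n))^2 * r^(2*n) + (q^2)^n) / 2) sums ((X + 1 / (1 - q^2)) / 2)"
    by (intro sums_divide sums_add energy geometric_sums)
  moreover have term_le: "norm (c n * z^n) \<le> ((cmod (c n))^2 * r^(2*n) + (q^2)^n) / 2" for n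
  proof -
    have "norm (c n * z^n) \<le> cmod (c n) * (q * r) ^ n"
      unfolding norm_mult norm_power by (intro mult_left_mono power_mono z) auto
    also have "\<dots> = (cmod (c n) * r^n) * q^n" by (simp add: power_mult_distrib)
    also have "\<dots> \<le> ((cmod (c n) * r^n)^2 + (q^n)^2) / 2"
      using sum_squares_bound[of "cmod (c n) * r^n" "q^n"] by (simp add: field_simps)
    also have "\<dots> = ((cmod (c n))^2 * r^(2*n) + (q^2)^n) / 2"
      by (simp add: power_mult_distrib power_mult[symmetric] mult.commute)
    finally show ?thesis .
  qed
  ultimately have summable: "summable (\<lambda>n. norm (c n * z^n))"
    by (intro summable_comparison_test[OF _ sums_summable]) auto
  have "norm fz \<le> (\<Sum>n. norm (c n * z^n))"
    using sums_unique[OF sums] summable_norm[OF summable] by simp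
  also have "\<dots> \<le> (X + 1 / (1 - q^2)) / 2"
    using suminf_le[OF term_le summable sums_summable[OF majorant]] sums_unique[OF majorant] by simp
  finally show ?thesis .
qed

text \<open>The bound does not depend on \<open>M\<close>: applied to all powers of an inner function it forces
  \<open>|\<phi> z| \<le> 1\<close>.\<close>
lemma norm_le_if_unimodular_radial_limits:
  assumes hol: "\<psi> holomorphic_on unit_disc" and bound: "\<And>w. w \<in> unit_disc \<Longrightarrow> norm (\<psi> w) \<le> M"
    and unimodular: "AE t in lborel. t \<in> {0..2*pi} \<longrightarrow> (\<exists>L. radial_limit \<psi> t L \<and> norm L = 1)"
    and z: "norm z < q" and q: "q < 1"
  shows "norm (\<psi> z) \<le> (1 + 1 / (1 - q^2)) / 2"
proof -
  have "0 < q" using z norm_ge_zero[of z] by linarith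
  define c where "c n = (deriv ^^ n) \<psi> 0 / fact n" for n
  have sums: "\<And>w. w \<in> unit_disc \<Longrightarrow> (\<lambda>n. c n * w ^ n) sums \<psi> w"
    unfolding c_def by (rule holomorphic_on_unit_disc_sums[OF hol])
  have cont: "continuous_on unit_disc \<psi>" using hol by (rule holomorphic_on_imp_continuous_on)
  define X where "X j = (LINT t:{0..2*pi}|lborel. (cmod (\<psi> (radii j * cis t)))^2) / (2*pi)" for j
  have energy: "(\<lambda>n. (cmod (c n))^2 * radii j^(2*n)) sums X j" for j
    unfolding X_def using radii_pos[of j] radii_less_1[of j]
    by (intro power_series_circle_energy_sums[OF sums _ _ cont]) auto
  have "(\<lambda>j. LINT t:{0..2*pi}|lborel. (cmod (\<psi> (radii j * cis t)))^2) \<longlonglongrightarrow> (LINT t:{0..2*pi}|lborel. 1)"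
  proof (rule set_integral_circle_dominated_convergence[where B = "M^2"])
    show "AE t in lborel. t \<in> {0..2*pi} \<longrightarrow> (\<lambda>j. (cmod (\<psi> (radii j * cis t)))\<^sup>2) \<longlonglongrightarrow> 1"
      using unimodular
    proof eventually_elim
      case (elim t)
      then show ?case
        using tendsto_power[OF tendsto_norm[OF radial_limit_radii_tendsto], of \<psi> t _ 2] by force
    qed
    show "norm ((cmod (\<psi> (radii j * cis t)))\<^sup>2) \<le> M^2" for j t
      using bound[OF radii_circle_in_unit_disc] by (simp add: power_mono)
  qed (auto intro!: continuous_intros continuous_on_radii_circle cont)
  then have "X \<longlonglongrightarrow> 2*pi / (2*pi)"
    unfolding X_def by (intro tendsto_divide tendsto_const) (auto simp: set_lebesgue_integral_def)
  then have "(\<lambda>j. (X j + 1 / (1 - q^2)) / 2) \<longlonglongrightarrow> (1 + 1 / (1 - q^2)) / 2"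
    by (intro tendsto_intros) simp_all
  moreover have "eventually (\<lambda>j. norm z / q \<le> radii j) sequentially"
    using z q \<open>0 < q\<close> by (intro eventually_radii_ge) (simp add: divide_less_eq)
  then have "eventually (\<lambda>j. norm (\<psi> z) \<le> (X j + 1 / (1 - q^2)) / 2) sequentially"
  proof eventually_elim
    case (elim j)
    have "norm z \<le> q * radii j"
      using elim z norm_ge_zero[of z] by (simp add: divide_le_eq mult.commute)
    then show ?case
      using z q \<open>0 < q\<close> by (intro norm_power_series_le_energy[OF sums energy _ _ _ radii_pos]) auto
  qed
  ultimately show ?thesis
    by (intro tendsto_le[OF trivial_limit_sequentially _ tendsto_const])
qed

lemma inner_fun_norm_le_1:
  assumes inner: "inner_fun \<phi>" and z: "z \<in> unit_disc"
  shows "norm (\<phi> z) \<le> 1"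
proof (rule ccontr)
  assume "\<not> norm (\<phi> z) \<le> 1"
  then obtain k where k: "(1 + 1 / (1 - ((1 + norm z) / 2)^2)) / 2 < norm (\<phi> z) ^ k"
    using real_arch_pow by (metis not_le)
  have hol: "\<phi> holomorphic_on unit_disc" and bounded: "bounded (\<phi> ` unit_disc)"
    using inner by (auto simp: inner_fun_def H_inf_def)
  obtain M where M: "\<And>w. w \<in> unit_disc \<Longrightarrow> norm (\<phi> w) \<le> M"
    using bounded by (meson bounded_pos imageI)
  have "AE t in lborel. t \<in> {0..2*pi} \<longrightarrow> (\<exists>L. radial_limit \<phi> t L \<and> norm L = 1)"
    using inner by (simp add: inner_fun_def)
  then have "AE t in lborel. t \<in> {0..2*pi} \<longrightarrow> (\<exists>L. radial_limit (\<lambda>w. \<phi> w ^ k) t L \<and> norm L = 1)"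
  proof eventually_elim
    case (elim t)
    show ?case
    proof
      assume "t \<in> {0..2*pi}"
      then obtain L where "radial_limit \<phi> t L" "norm L = 1" using elim by blast
      then show "\<exists>L. radial_limit (\<lambda>w. \<phi> w ^ k) t L \<and> norm L = 1"
        unfolding radial_limit_def by (intro exI[of _ "L^k"]) (auto intro: tendsto_power simp: norm_power)
    qed
  qed
  then have "norm (\<phi> z ^ k) \<le> (1 + 1 / (1 - ((1 + norm z) / 2)^2)) / 2"
    using z M by (intro norm_le_if_unimodular_radial_limits[where M = "M^k"] holomorphic_intros hol)
       (auto simp: norm_power intro: power_mono)
  with k show False by (simp add: norm_power)
qed

lemma norm_less_1_if_not_constant:
  assumes hol: "f holomorphic_on unit_disc" and le: "\<And>z. z \<in> unit_disc \<Longrightarrow> norm (f z) \<le> 1"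
    and "\<not> f constant_on unit_disc" and z: "z \<in> unit_disc"
  shows "norm (f z) < 1"
proof -
  have "open (f ` unit_disc)"
    by (rule open_mapping_thm[OF hol]) (use assms(3) in auto)
  moreover have "f ` unit_disc \<subseteq> cball 0 1" using le by auto
  ultimately have "f ` unit_disc \<subseteq> interior (cball 0 1)" using interior_maximal by blast
  then show ?thesis using z by (auto simp: image_subset_iff)
qed

section \<open>\<open>H\<^sup>1\<close> functions with imaginary boundary values\<close>

lemma circle_mean_Re:
  fixes r :: real
  assumes hol: "h holomorphic_on unit_disc" and r: "0 \<le> r" "r < 1"
  shows "(LINT t:{0..2*pi}|lborel. Re (h (r * cis t))) = 2*pi * Re (h 0)"
proof -
  have cont: "continuous_on unit_disc h" using hol by (rule holomorphic_on_imp_continuous_on)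
  have "\<And>w. w \<in> unit_disc \<Longrightarrow> (\<lambda>n. ((deriv ^^ n) h 0 / fact n) * w ^ n) sums h w"
    by (rule holomorphic_on_unit_disc_sums[OF hol])
  from power_series_circle_mean[OF this r cont]
  have "(LINT t:{0..2*pi}|lborel. h (r * cis t)) = 2*pi * h 0" by simp
  moreover have "set_integrable lborel {0..2*pi} (\<lambda>t. h (r * cis t))"
    by (intro borel_integrable_atLeastAtMost' continuous_on_compose2[OF cont])
       (use r in \<open>auto intro!: continuous_intros simp: norm_mult\<close>)
  ultimately show ?thesis by (simp add: set_integral_Re)
qed

lemma norm_poly_le_sum_norm_coeffs:
  assumes "norm z \<le> 1"
  shows "norm (\<Sum>n<N. b n * z^n) \<le> (\<Sum>n<N. cmod (b n))"
proof -
  have "norm (\<Sum>n<N. b n * z^n) \<le> (\<Sum>n<N. norm (b n * z^n))" by (rule norm_sum)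
  also have "\<dots> \<le> (\<Sum>n<N. cmod (b n))"
  proof (rule sum_mono)
    fix n
    have "norm z ^ n \<le> 1" using assms by (intro power_le_one) auto
    then show "norm (b n * z^n) \<le> cmod (b n)"
      by (simp add: norm_mult norm_power mult_left_le)
  qed
  finally show ?thesis .
qed

lemma sums_tail:
  fixes a :: "nat \<Rightarrow> 'a::real_normed_vector"
  assumes "a sums s"
  shows "(\<lambda>n. if n < N then 0 else a n) sums (s - (\<Sum>n<N. a n))"
proof -
  have "(\<lambda>n. if n < N then a n else 0) sums (\<Sum>n\<in>{..<N}. if n < N then a n else 0)"
    by (rule sums_finite) auto
  then have "(\<lambda>n. a n - (if n < N then a n else 0)) sums (s - (\<Sum>n<N. a n))"
    using sums_diff[OF assms] by simp
  moreover have "(\<lambda>n. a n - (if n < N then a n else 0)) = (\<lambda>n. if n < N then 0 else a n)"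
    by auto
  ultimately show ?thesis by simp
qed

lemma power_series_tail_circle_energy:
  fixes b :: "nat \<Rightarrow> complex" and r :: real
  assumes sums: "\<And>w. w \<in> unit_disc \<Longrightarrow> (\<lambda>n. b n * w^n) sums g w"
    and cont: "continuous_on unit_disc g" and summable: "summable (\<lambda>n. (cmod (b n))^2)"
    and r: "0 \<le> r" "r < 1"
  shows "(LINT t:{0..2*pi}|lborel. (cmod (g (r * cis t) - (\<Sum>n<N. b n * (r * cis t)^n)))^2)
           \<le> 2*pi * ((\<Sum>n. (cmod (b n))^2) - (\<Sum>n<N. (cmod (b n))^2))"
proof -
  define d where "d n = (if n < N then 0 else b n)" for n
  define e where "e w = g w - (\<Sum>n<N. b n * w^n)" for w
  have tail_sums: "(\<lambda>n. d n * w^n) sums e w" if "w \<in> unit_disc" for w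
  proof -
    have "(\<lambda>n. d n * w^n) = (\<lambda>n. if n < N then 0 else b n * w^n)" by (auto simp: d_def)
    then show ?thesis using sums_tail[OF sums[OF that], of N] by (simp add: e_def)
  qed
  have tail_energy: "(\<lambda>n. (cmod (d n))^2) sums ((\<Sum>n. (cmod (b n))^2) - (\<Sum>n<N. (cmod (b n))^2))"
  proof -
    have "(\<lambda>n. (cmod (d n))^2) = (\<lambda>n. if n < N then 0 else (cmod (b n))^2)" by (auto simp: d_def)
    then show ?thesis using sums_tail[OF summable_sums[OF summable], of N] by simp
  qed
  have "continuous_on unit_disc e"
    unfolding e_def[abs_def] by (intro continuous_intros cont)
  then have "(\<lambda>n. (cmod (d n))^2 * r^(2*n)) sums ((LINT t:{0..2*pi}|lborel. (cmod (e (r * cis t)))^2) / (2*pi))"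
    by (intro power_series_circle_energy_sums[OF tail_sums r])
  moreover have "(cmod (d n))^2 * r^(2*n) \<le> (cmod (d n))^2" for n
    using r by (intro mult_left_le power_le_one) auto
  ultimately have "(LINT t:{0..2*pi}|lborel. (cmod (e (r * cis t)))^2) / (2*pi)
                     \<le> (\<Sum>n. (cmod (b n))^2) - (\<Sum>n<N. (cmod (b n))^2)"
    by (intro sums_le[OF _ _ tail_energy])
  then show ?thesis by (simp add: e_def divide_le_eq mult.commute)
qed

text \<open>Split \<open>g\<close> into a polynomial head, bounded by some \<open>B\<close>, and a tail of small
  energy. Then \<open>Re h \<le> 2|tail|\<^sup>2 + min (Re h) (2B\<^sup>2)\<close>; the truncated term is bounded, so by dominated
  convergence its circle means tend to the boundary mean \<open>0\<close>.\<close>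
context
  fixes h g :: "complex \<Rightarrow> complex" and b :: "nat \<Rightarrow> complex"
  assumes hol: "h holomorphic_on unit_disc"
    and Re_nonneg: "\<And>z. z \<in> unit_disc \<Longrightarrow> 0 \<le> Re (h z)"
    and norm_le: "\<And>z. z \<in> unit_disc \<Longrightarrow> norm (h z) \<le> (norm (g z))^2"
    and sums: "\<And>w. w \<in> unit_disc \<Longrightarrow> (\<lambda>n. b n * w^n) sums g w"
    and cont: "continuous_on unit_disc g"
    and summable: "summable (\<lambda>n. (cmod (b n))^2)"
    and boundary: "AE t in lborel. t \<in> {0..2*pi} \<longrightarrow> (\<lambda>j. Re (h (radii j * cis t))) \<longlonglongrightarrow> 0"
begin

lemma Re_le_tail_plus_truncated:
  assumes z: "z \<in> unit_disc"
  shows "Re (h z) \<le> 2 * (cmod (g z - (\<Sum>n<N. b n * z^n)))^2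
                     + min (Re (h z)) (2 * (\<Sum>n<N. cmod (b n))^2)"
proof -
  let ?e = "g z - (\<Sum>n<N. b n * z^n)" and ?B = "\<Sum>n<N. cmod (b n)"
  have "Re (h z) \<le> (cmod (?e + (\<Sum>n<N. b n * z^n)))^2"
    using complex_Re_le_cmod[of "h z"] norm_le[OF z] by simp
  also have "\<dots> \<le> (cmod ?e + ?B)^2"
    using norm_poly_le_sum_norm_coeffs[of z b N] z
    by (intro power_mono norm_triangle_le add_left_mono) auto
  also have "\<dots> \<le> 2 * (cmod ?e)^2 + 2 * ?B^2"
    using sum_squares_bound[of "cmod ?e" ?B] by (simp add: power2_sum)
  finally show ?thesis by (auto simp: min_def)
qed

lemma Re_0_le_tail_energy_plus_truncated_mean:
  "2*pi * Re (h 0) \<le> 4*pi * ((\<Sum>n. (cmod (b n))^2) - (\<Sum>n<N. (cmod (b n))^2))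
     + (LINT t:{0..2*pi}|lborel. min (Re (h (radii j * cis t))) (2 * (\<Sum>n<N. cmod (b n))^2))"
  (is "_ \<le> 4*pi*?\<tau> + ?I")
proof -
  define e where "e z = g z - (\<Sum>n<N. b n * z^n)" for z
  have cont_h: "continuous_on unit_disc h" using hol by (rule holomorphic_on_imp_continuous_on)
  have cont_e: "continuous_on unit_disc e" unfolding e_def[abs_def] by (intro continuous_intros cont)
  have "2*pi * Re (h 0) = (LINT t:{0..2*pi}|lborel. Re (h (radii j * cis t)))"
    using circle_mean_Re[OF hol, of "radii j"] radii_pos[of j] radii_less_1[of j] by simp
  also have "\<dots> \<le> (LINT t:{0..2*pi}|lborel. 2 * (cmod (e (radii j * cis t)))^2
                      + min (Re (h (radii j * cis t))) (2 * (\<Sum>n<N. cmod (b n))^2))"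
    unfolding e_def
    by (intro set_integral_mono borel_integrable_atLeastAtMost' continuous_intros
              continuous_on_radii_circle cont_h cont_e[unfolded e_def]
              Re_le_tail_plus_truncated radii_circle_in_unit_disc)
  also have "\<dots> = 2 * (LINT t:{0..2*pi}|lborel. (cmod (e (radii j * cis t)))^2) + ?I"
    by (subst set_integral_add)
       (auto intro!: borel_integrable_atLeastAtMost' continuous_intros continuous_on_radii_circle
                     cont_h cont_e)
  also have "\<dots> \<le> 4*pi*?\<tau> + ?I"
    using power_series_tail_circle_energy[OF sums cont summable, of "radii j" N]
      radii_pos[of j] radii_less_1[of j]
    by (simp add: e_def)
  finally show ?thesis .
qed

lemma truncated_circle_mean_tendsto_0:
  assumes "0 \<le> C"
  shows "(\<lambda>j. LINT t:{0..2*pi}|lborel. min (Re (h (radii j * cis t))) C) \<longlonglongrightarrow> 0"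
proof -
  have cont_h: "continuous_on unit_disc h" using hol by (rule holomorphic_on_imp_continuous_on)
  have "(\<lambda>j. LINT t:{0..2*pi}|lborel. min (Re (h (radii j * cis t))) C) \<longlonglongrightarrow> (LINT t:{0..2*pi}|lborel. 0)"
  proof (rule set_integral_circle_dominated_convergence[where B = C])
    show "AE t in lborel. t \<in> {0..2*pi} \<longrightarrow> (\<lambda>j. min (Re (h (radii j * cis t))) C) \<longlonglongrightarrow> 0"
      using boundary
    proof eventually_elim
      case (elim t)
      then show ?case
        using tendsto_min[OF _ tendsto_const, of _ 0 _ C] assms by (auto simp: min_def)
    qed
    show "norm (min (Re (h (radii j * cis t))) C) \<le> C" for j t
      using Re_nonneg[OF radii_circle_in_unit_disc] assms by auto
  qed (auto intro!: continuous_intros continuous_on_radii_circle cont_h)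
  then show ?thesis by (simp add: set_lebesgue_integral_def)
qed

lemma Re_0_le_tail_energy:
  "Re (h 0) \<le> 2 * ((\<Sum>n. (cmod (b n))^2) - (\<Sum>n<N. (cmod (b n))^2))"
proof -
  let ?\<tau> = "(\<Sum>n. (cmod (b n))^2) - (\<Sum>n<N. (cmod (b n))^2)"
  have "(\<lambda>j. 4*pi*?\<tau> + (LINT t:{0..2*pi}|lborel. min (Re (h (radii j * cis t))) (2 * (\<Sum>n<N. cmod (b n))^2)))
          \<longlonglongrightarrow> 4*pi*?\<tau> + 0"
    by (intro tendsto_intros truncated_circle_mean_tendsto_0) (auto intro: sum_nonneg)
  then have "2*pi * Re (h 0) \<le> 4*pi*?\<tau> + 0"
    by (rule tendsto_lowerbound)
       (use Re_0_le_tail_energy_plus_truncated_mean in \<open>auto intro: always_eventually\<close>)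
  then show ?thesis by simp
qed

lemma Re_0_nonpos: "Re (h 0) \<le> 0"
proof -
  have "(\<lambda>N. 2 * ((\<Sum>n. (cmod (b n))^2) - (\<Sum>n<N. (cmod (b n))^2))) \<longlonglongrightarrow> 2 * ((\<Sum>n. (cmod (b n))^2) - (\<Sum>n. (cmod (b n))^2))"
    by (intro tendsto_intros summable_LIMSEQ[OF summable])
  then have "Re (h 0) \<le> 2 * ((\<Sum>n. (cmod (b n))^2) - (\<Sum>n. (cmod (b n))^2))"
    by (rule tendsto_lowerbound) (use Re_0_le_tail_energy in \<open>auto intro: always_eventually\<close>)
  then show ?thesis by simp
qed

end

section \<open>The Cayley transform of a Koebe inner function\<close>

definition cayley :: "complex \<Rightarrow> complex" where
  "cayley w = (1 + w) / (1 - w)"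

lemma Re_cayley: "Re (cayley w) = (1 - (cmod w)^2) / (cmod (1 - w))^2"
proof -
  have "Re (cayley w) = (Re (1 + w) * Re (1 - w) + Im (1 + w) * Im (1 - w)) / (cmod (1 - w))^2"
    unfolding cayley_def by (rule Re_divide')
  also have "Re (1 + w) * Re (1 - w) + Im (1 + w) * Im (1 - w) = 1 - (cmod w)^2"
    using cmod_power2[of w] by (simp add: algebra_simps power2_eq_square)
  finally show ?thesis .
qed

lemma Re_cayley_pos:
  assumes "norm w < 1"
  shows "0 < Re (cayley w)"
proof -
  have "(cmod w)^2 < 1" and "w \<noteq> 1" using assms by (auto simp: power_less_one_iff)
  then show ?thesis by (simp add: Re_cayley)
qed

lemma cayley_square: "w \<noteq> 1 \<Longrightarrow> (cayley w)^2 = 1 - koebe w"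
  by (simp add: cayley_def koebe_def divide_simps) (simp add: algebra_simps power2_eq_square)

lemma koebe_times_square: "w \<noteq> 1 \<Longrightarrow> koebe w * (1 - w)^2 = -4 * w"
  by (simp add: koebe_def)

lemma norm_cayley_le_koebe: "w \<noteq> 1 \<Longrightarrow> norm (cayley w) \<le> 1 + sqrt (norm (koebe w))"
proof -
  assume "w \<noteq> 1"
  then have "(norm (cayley w))^2 = norm (1 - koebe w)" by (simp flip: norm_power cayley_square)
  also have "\<dots> \<le> 1 + norm (koebe w)" using norm_triangle_ineq4[of 1 "koebe w"] by simp
  also have "\<dots> \<le> (1 + sqrt (norm (koebe w)))^2" by (simp add: power2_sum)
  finally show ?thesis by (rule power2_le_imp_le) simp
qed

text \<open>Where \<open>koebe \<circ> w\<close> converges, the unimodular limit of \<open>w\<close> avoids the pole \<open>1\<close>, and \<open>cayley\<close> maps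
  the rest of the circle to the imaginary axis.\<close>
lemma Re_cayley_tendsto_0:
  assumes w: "w \<longlonglongrightarrow> L" and L: "norm L = 1" and koebe: "(\<lambda>j. koebe (w j)) \<longlonglongrightarrow> K"
    and ne1: "\<And>j. w j \<noteq> 1"
  shows "(\<lambda>j. Re (cayley (w j))) \<longlonglongrightarrow> 0"
proof -
  have "(\<lambda>j. koebe (w j) * (1 - w j)^2) \<longlonglongrightarrow> K * (1 - L)^2"
    by (intro tendsto_intros koebe w)
  moreover have "(\<lambda>j. koebe (w j) * (1 - w j)^2) \<longlonglongrightarrow> -4 * L"
    unfolding koebe_times_square[OF ne1] by (intro tendsto_intros w)
  ultimately have "K * (1 - L)^2 = -4 * L" by (rule LIMSEQ_unique)
  then have "L \<noteq> 1" by auto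
  then have "(\<lambda>j. Re (cayley (w j))) \<longlonglongrightarrow> Re (cayley L)"
    unfolding cayley_def by (intro tendsto_intros w) auto
  then show ?thesis using L by (simp add: Re_cayley)
qed

context
  fixes \<phi> :: "complex \<Rightarrow> complex"
  assumes hol: "\<phi> holomorphic_on unit_disc" and lt1: "\<And>z. z \<in> unit_disc \<Longrightarrow> norm (\<phi> z) < 1"
begin

lemma holomorphic_cayley_comp: "(\<lambda>z. cayley (\<phi> z)) holomorphic_on unit_disc"
  unfolding cayley_def using lt1 by (intro holomorphic_intros hol) force

lemma holomorphic_sqrt_cayley_comp: "(\<lambda>z. csqrt (cayley (\<phi> z))) holomorphic_on unit_disc"
proof (rule holomorphic_on_csqrt'[OF holomorphic_cayley_comp])
  fix z :: complex assume "z \<in> unit_disc"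
  from Re_cayley_pos[OF lt1[OF this]] show "cayley (\<phi> z) \<notin> \<real>\<^sub>\<le>\<^sub>0"
    by (auto simp: complex_nonpos_Reals_iff)
qed

lemma radial_Re_cayley_tendsto_0:
  assumes "AE t in lborel. t \<in> {0..2*pi} \<longrightarrow> (\<exists>L. radial_limit \<phi> t L \<and> norm L = 1)"
    and "AE t in lborel. t \<in> {0..2*pi} \<longrightarrow> (\<exists>K. radial_limit (koebe \<circ> \<phi>) t K)"
  shows "AE t in lborel. t \<in> {0..2*pi} \<longrightarrow> (\<lambda>j. Re (cayley (\<phi> (radii j * cis t)))) \<longlonglongrightarrow> 0"
  using assms
proof eventually_elim
  case (elim t)
  show ?case
  proof
    assume "t \<in> {0..2*pi}"
    then obtain L K where L: "radial_limit \<phi> t L" "norm L = 1" and K: "radial_limit (koebe \<circ> \<phi>) t K"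
      using elim by blast
    have "(\<lambda>j. koebe (\<phi> (radii j * cis t))) \<longlonglongrightarrow> K"
      using radial_limit_radii_tendsto[OF K] by (simp add: o_def)
    moreover have "\<phi> (radii j * cis t) \<noteq> 1" for j
      using lt1[OF radii_circle_in_unit_disc, of j t] by auto
    ultimately show "(\<lambda>j. Re (cayley (\<phi> (radii j * cis t)))) \<longlonglongrightarrow> 0"
      by (intro Re_cayley_tendsto_0[OF radial_limit_radii_tendsto[OF L(1)] L(2)])
  qed
qed

text \<open>Since \<open>|\<surd>(cayley \<circ> \<phi>)|\<^sup>2 \<le> 1 + |koebe \<circ> \<phi>|^(1/2)\<close>, the \<open>H^(1/2)\<close> bound on \<open>koebe \<circ> \<phi>\<close>
  bounds the circle energies of \<open>\<surd>(cayley \<circ> \<phi>)\<close>.\<close>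
lemma summable_sqrt_cayley_coeffs:
  assumes hardy: "hardy (1/2) (koebe \<circ> \<phi>)"
  shows "summable (\<lambda>n. (cmod ((deriv ^^ n) (\<lambda>z. csqrt (cayley (\<phi> z))) 0 / fact n))^2)"
proof -
  define g where "g z = csqrt (cayley (\<phi> z))" for z
  define K where "K = koebe \<circ> \<phi>"
  have cont_g: "continuous_on unit_disc g"
    unfolding g_def using holomorphic_sqrt_cayley_comp by (rule holomorphic_on_imp_continuous_on)
  have "K holomorphic_on unit_disc" using hardy unfolding hardy_def K_def ..
  then have cont_K: "continuous_on unit_disc K" by (rule holomorphic_on_imp_continuous_on)
  obtain M where M: "\<And>r. r \<in> {0<..<1} \<Longrightarrow>
      (LINT t:{0..2*pi}|lborel. norm (K (complex_of_real r * cis t)) powr (1/2)) \<le> M"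
    using hardy unfolding hardy_def K_def by blast
  define X where "X j = (LINT t:{0..2*pi}|lborel. (cmod (g (radii j * cis t)))^2) / (2*pi)" for j
  have "\<And>w. w \<in> unit_disc \<Longrightarrow> (\<lambda>n. ((deriv ^^ n) g 0 / fact n) * w ^ n) sums g w"
    unfolding g_def by (rule holomorphic_on_unit_disc_sums[OF holomorphic_sqrt_cayley_comp])
  then have energy: "(\<lambda>n. (cmod ((deriv ^^ n) g 0 / fact n))^2 * radii j^(2*n)) sums X j" for j
    unfolding X_def using radii_pos[of j] radii_less_1[of j]
    by (intro power_series_circle_energy_sums cont_g) auto
  have "X j \<le> (2*pi + M) / (2*pi)" for j
  proof -
    have "(cmod (g (radii j * cis t)))^2 \<le> 1 + sqrt (norm (K (radii j * cis t)))" for t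
      using lt1[OF radii_circle_in_unit_disc, of j t]
      by (auto simp: g_def K_def intro!: norm_cayley_le_koebe)
    then have "(LINT t:{0..2*pi}|lborel. (cmod (g (radii j * cis t)))^2)
                 \<le> (LINT t:{0..2*pi}|lborel. 1 + sqrt (norm (K (radii j * cis t))))"
      by (intro set_integral_mono borel_integrable_atLeastAtMost' continuous_intros
                continuous_on_radii_circle cont_g cont_K)
    also have "\<dots> = 2*pi + (LINT t:{0..2*pi}|lborel. norm (K (radii j * cis t)) powr (1/2))"
      by (subst set_integral_add)
         (auto intro!: borel_integrable_atLeastAtMost' continuous_intros continuous_on_radii_circle cont_K
               simp: powr_half_sqrt set_lebesgue_integral_def)
    also have "\<dots> \<le> 2*pi + M"
      using M[of "radii j"] radii_pos[of j] radii_less_1[of j] by simp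
    finally show ?thesis unfolding X_def by (simp add: divide_right_mono)
  qed
  then have "summable (\<lambda>n. (cmod ((deriv ^^ n) g 0 / fact n))^2)"
    by (intro summable_if_radii_weighted_sums_bounded[OF _ energy]) auto
  then show ?thesis by (simp add: g_def[abs_def])
qed

lemma Re_cayley_0_nonpos:
  assumes "AE t in lborel. t \<in> {0..2*pi} \<longrightarrow> (\<exists>L. radial_limit \<phi> t L \<and> norm L = 1)"
    and "AE t in lborel. t \<in> {0..2*pi} \<longrightarrow> (\<exists>K. radial_limit (koebe \<circ> \<phi>) t K)"
    and "hardy (1/2) (koebe \<circ> \<phi>)"
  shows "Re (cayley (\<phi> 0)) \<le> 0"
proof -
  let ?g = "\<lambda>z. csqrt (cayley (\<phi> z))"
  show ?thesis
  proof (rule Re_0_nonpos[where g = ?g and b = "\<lambda>n. (deriv ^^ n) ?g 0 / fact n"])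
    show "\<And>w. w \<in> unit_disc \<Longrightarrow> (\<lambda>n. ((deriv ^^ n) ?g 0 / fact n) * w ^ n) sums ?g w"
      by (rule holomorphic_on_unit_disc_sums[OF holomorphic_sqrt_cayley_comp])
    show "continuous_on unit_disc ?g"
      by (intro holomorphic_on_imp_continuous_on holomorphic_sqrt_cayley_comp)
    show "AE t in lborel. t \<in> {0..2*pi} \<longrightarrow> (\<lambda>j. Re (cayley (\<phi> (radii j * cis t)))) \<longlonglongrightarrow> 0"
      by (rule radial_Re_cayley_tendsto_0[OF assms(1,2)])
  qed (use assms(3) lt1 Re_cayley_pos in
        \<open>auto intro: holomorphic_cayley_comp less_imp_le summable_sqrt_cayley_coeffs\<close>)
qed

end

theorem corollary3p8:
  fixes \<phi> :: "complex \<Rightarrow> complex"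
  assumes "inner_fun \<phi>"
    and "R_half (koebe \<circ> \<phi>)"
  shows "\<exists>c. \<forall>z\<in>unit_disc. (koebe \<circ> \<phi>) z = c"
proof (rule ccontr)
  assume "\<not> (\<exists>c. \<forall>z\<in>unit_disc. (koebe \<circ> \<phi>) z = c)"
  then have "\<not> \<phi> constant_on unit_disc" unfolding constant_on_def by (metis comp_apply)
  moreover have hol: "\<phi> holomorphic_on unit_disc" using assms(1) by (simp add: inner_fun_def H_inf_def)
  ultimately have lt1: "\<And>z. z \<in> unit_disc \<Longrightarrow> norm (\<phi> z) < 1"
    using norm_less_1_if_not_constant inner_fun_norm_le_1[OF assms(1)] by blast
  have "AE t in lborel. t \<in> {0..2*pi} \<longrightarrow> (\<exists>K. radial_limit (koebe \<circ> \<phi>) t K \<and> K \<in> \<real>)"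
    using assms(2) by (simp add: R_half_def R_plus_def)
  then have "AE t in lborel. t \<in> {0..2*pi} \<longrightarrow> (\<exists>K. radial_limit (koebe \<circ> \<phi>) t K)"
    by eventually_elim blast
  then have "Re (cayley (\<phi> 0)) \<le> 0"
    using assms by (intro Re_cayley_0_nonpos hol lt1) (auto simp: inner_fun_def R_half_def)
  with Re_cayley_pos[OF lt1[of 0]] show False by simp
qed

end
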